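(* Let $h$ be a harmonic function on $\mathbf D$ and $B>0$ a constant such that $|h(z)|\le B|z|$ for all $z\in\mathbf D$ and $\max_{1/6<r<1/3}h(re^{i\theta})\ge1$ for every $\theta\in[0,2\pi)$. If the integer $A$ is large enough, then the series $u(z)=\sum_{k=0}^\infty A^kh\big(z^{2^{A^k}}\big)$ converges in $\mathbf D$ to a function of class $\mathcal K$, and for some $d>0$, $$\limsup_{r\to1}\frac{u(re^{i\theta})}{|\log(1-r)|}\ge d\quad\text{for every }\theta\in[0,2\pi).$$
   Context: $\mathbf D$ is the open unit disc. $\mathcal K$ is the class of harmonic functions $u$ on $\mathbf D$ for which there is a constant $C$ with $u(z)\le C\log\frac{e}{1-|z|}$ for all $z\in\mathbf D$. *)

theory Defs
  imports "HOL-Analysis.Analysis"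
begin

abbreviation unit_disc :: "complex set" where
  "unit_disc \<equiv> ball 0 1"

text \<open>Harmonic functions on an open set S of the plane (identified with complex numbers
  z = x + i y): u is of class C^2 on S (with first partials ux, uy and second partials
  uxx, uxy, uyx, uyy, all continuous) and its Laplacian uxx + uyy vanishes on S.\<close>
definition harmonic_on :: "(complex \<Rightarrow> real) \<Rightarrow> complex set \<Rightarrow> bool" where
  "harmonic_on u S \<longleftrightarrow> open S \<and>
     (\<exists>ux uy uxx uxy uyx uyy.
        (\<forall>z\<in>S. (u has_derivative (\<lambda>w. Re w * ux z + Im w * uy z)) (at z)) \<and>
        (\<forall>z\<in>S. (ux has_derivative (\<lambda>w. Re w * uxx z + Im w * uxy z)) (at z)) \<and>
        (\<forall>z\<in>S. (uy has_derivative (\<lambda>w. Re w * uyx z + Im w * uyy z)) (at z)) \<and>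
        continuous_on S uxx \<and> continuous_on S uxy \<and>
        continuous_on S uyx \<and> continuous_on S uyy \<and>
        (\<forall>z\<in>S. uxx z + uyy z = 0))"

definition class_K :: "(complex \<Rightarrow> real) \<Rightarrow> bool" where
  "class_K u \<longleftrightarrow> harmonic_on u unit_disc \<and>
     (\<exists>C. \<forall>z\<in>unit_disc. u z \<le> C * ln (exp 1 / (1 - norm z)))"

end

theory Submission
  imports Defs
begin

text \<open>
  Write \<open>N\<^sub>k = 2^(A^k)\<close>. The exponents grow so fast that \<open>\<Sum>\<^sub>k A^k N\<^sub>k\<^sup>2 r^N\<^sub>k\<close> converges for
  every \<open>r < 1\<close>; since every term \<open>A^k h(z^N\<^sub>k)\<close> is \<open>h\<close> composed with a holomorphic map,
  its first and second partial derivatives are bounded by such terms, so the series and its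
  partial derivatives converge locally uniformly and the sum \<open>u\<close> is harmonic.

  For the upper bound, split \<open>\<Sum>\<^sub>k A^k r^N\<^sub>k\<close> at the first \<open>k\<^sub>0\<close> with \<open>N\<^sub>k\<^sub>0 \<ge> 1/(1-r)\<close>:
  the earlier terms add up to at most \<open>2A^(k\<^sub>0-1) = O(log (1/(1-r)))\<close>, the later ones decay
  geometrically from \<open>A^k\<^sub>0\<close>.

  For the lower bound on the ray of angle \<open>\<theta>\<close> and a level \<open>K\<close>, pick \<open>s \<in> (1/6, 1/3)\<close> with
  \<open>h(s e^(i\<phi>)) > 1/2\<close>, where \<open>\<phi>\<close> is the angle of \<open>N\<^sub>K \<theta>\<close>, and let \<open>r = s^(1/N\<^sub>K)\<close>. Then the
  \<open>K\<close>-th term is at least \<open>A^K/2\<close>, all other terms together are at most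
  \<open>9BA^K/(A-1) \<le> A^K/4\<close> once \<open>A \<ge> 36B + 1\<close> (the later ones because \<open>s^(2^(A^k-A^K))\<close> is
  doubly exponentially small), and \<open>1 - r \<approx> 1/N\<^sub>K\<close> gives \<open>|log(1-r)| \<le> 2A^K\<close>; as \<open>K \<rightarrow> \<infinity>\<close> these
  radii tend to 1.
\<close>

section \<open>Termwise differentiation of series of real functions on the plane\<close>

definition locally_summably_bounded :: "'a::metric_space set \<Rightarrow> (nat \<Rightarrow> 'a \<Rightarrow> 'b::real_normed_vector) \<Rightarrow> bool" where
  "locally_summably_bounded S g \<longleftrightarrow>
     (\<forall>z\<in>S. \<exists>e>0. \<exists>M. summable M \<and> (\<forall>k. \<forall>w\<in>ball z e. norm (g k w) \<le> M k))"

lemma locally_summably_bounded_uniform_limit: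
  fixes g :: "nat \<Rightarrow> 'a::metric_space \<Rightarrow> 'b::banach"
  assumes "locally_summably_bounded S g" "z \<in> S"
  obtains e where "e > 0"
    "uniform_limit (ball z e) (\<lambda>n w. \<Sum>i<n. g i w) (\<lambda>w. \<Sum>i. g i w) sequentially"
  using assms unfolding locally_summably_bounded_def by (metis Weierstrass_m_test)

lemma locally_summably_bounded_summable:
  fixes g :: "nat \<Rightarrow> 'a::metric_space \<Rightarrow> 'b::banach"
  assumes "locally_summably_bounded S g" "z \<in> S"
  shows "summable (\<lambda>k. g k z)"
proof -
  obtain e :: real and M where "e > 0" "summable M" "\<And>k. \<forall>w\<in>ball z e. norm (g k w) \<le> M k"
    using assms unfolding locally_summably_bounded_def by blast
  then show ?thesis by (metis centre_in_ball summable_comparison_test')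
qed

lemma continuous_on_suminf_locally_bounded:
  fixes g :: "nat \<Rightarrow> 'a::metric_space \<Rightarrow> 'b::banach"
  assumes "open S" "\<And>k. continuous_on S (g k)" "locally_summably_bounded S g"
  shows "continuous_on S (\<lambda>z. \<Sum>k. g k z)"
proof (rule continuous_at_imp_continuous_on, intro ballI)
  fix z assume z: "z \<in> S"
  obtain e where e: "e > 0" and lim: "uniform_limit (ball z e) (\<lambda>n w. \<Sum>i<n. g i w) (\<lambda>w. \<Sum>i. g i w) sequentially"
    using locally_summably_bounded_uniform_limit[OF assms(3) z] .
  define T where "T = ball z e \<inter> S"
  have "continuous_on T (\<lambda>w. \<Sum>i. g i w)"
    by (rule uniform_limit_theorem[OF _ uniform_limit_on_subset[OF lim]])
      (auto simp: T_def intro!: always_eventually continuous_on_sum continuous_on_subset[OF assms(2)])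
  moreover have "open T" "z \<in> T" using assms(1) z e by (auto simp: T_def)
  ultimately show "isCont (\<lambda>w. \<Sum>i. g i w) z" by (simp add: continuous_on_eq_continuous_at)
qed

lemma has_derivative_suminf_locally_bounded:
  fixes g p q :: "nat \<Rightarrow> complex \<Rightarrow> real"
  assumes "open S" "z \<in> S"
    and deriv: "\<And>k w. w \<in> S \<Longrightarrow> (g k has_derivative (\<lambda>v. Re v * p k w + Im v * q k w)) (at w)"
    and bounded: "locally_summably_bounded S g" "locally_summably_bounded S p"
      "locally_summably_bounded S q"
  shows "((\<lambda>w. \<Sum>k. g k w) has_derivative (\<lambda>v. Re v * (\<Sum>k. p k z) + Im v * (\<Sum>k. q k z))) (at z)"
proof -
  obtain e1 where e1: "e1 > 0" and lim_p: "uniform_limit (ball z e1) (\<lambda>n w. \<Sum>i<n. p i w) (\<lambda>w. \<Sum>i. p i w) sequentially"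
    using locally_summably_bounded_uniform_limit[OF bounded(2) \<open>z \<in> S\<close>] .
  obtain e2 where e2: "e2 > 0" and lim_q: "uniform_limit (ball z e2) (\<lambda>n w. \<Sum>i<n. q i w) (\<lambda>w. \<Sum>i. q i w) sequentially"
    using locally_summably_bounded_uniform_limit[OF bounded(3) \<open>z \<in> S\<close>] .
  obtain e3 where e3: "e3 > 0" "ball z e3 \<subseteq> S"
    using \<open>open S\<close> \<open>z \<in> S\<close> open_contains_ball by blast
  define T where "T = ball z (Min {e1, e2, e3})"
  have T: "open T" "convex T" "z \<in> T" "T \<subseteq> S" "T \<subseteq> ball z e1" "T \<subseteq> ball z e2"
    using e1 e2 e3 by (auto simp: T_def)
  have "\<exists>G. \<forall>w\<in>T. (\<lambda>n. g n w) sums G w \<and>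
          (G has_derivative (\<lambda>v. Re v * (\<Sum>k. p k w) + Im v * (\<Sum>k. q k w))) (at w within T)"
  proof (rule has_derivative_series[OF \<open>convex T\<close> _ _ \<open>z \<in> T\<close>])
    show "(\<lambda>n. g n z) sums (\<Sum>k. g k z)"
      using locally_summably_bounded_summable[OF bounded(1) \<open>z \<in> S\<close>] by (rule summable_sums)
    show "(g n has_derivative (\<lambda>v. Re v * p n w + Im v * q n w)) (at w within T)" if "w \<in> T" for n w
      using deriv[of w n] that T(4) has_derivative_at_withinI by blast
  next
    fix e :: real assume "e > 0"
    then have "e / 2 > 0" by simp
    from uniform_limitD[OF uniform_limit_on_subset[OF lim_p T(5)] this]
      uniform_limitD[OF uniform_limit_on_subset[OF lim_q T(6)] this]
    show "\<forall>\<^sub>F n in sequentially. \<forall>w\<in>T. \<forall>v. norm ((\<Sum>i<n. Re v * p i w + Im v * q i w) -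
            (Re v * (\<Sum>k. p k w) + Im v * (\<Sum>k. q k w))) \<le> e * norm v"
    proof eventually_elim
      case (elim n)
      show ?case
      proof (intro ballI allI)
        fix w v assume "w \<in> T"
        with elim have p: "\<bar>(\<Sum>i<n. p i w) - (\<Sum>i. p i w)\<bar> \<le> e / 2"
            and q: "\<bar>(\<Sum>i<n. q i w) - (\<Sum>i. q i w)\<bar> \<le> e / 2"
          by (auto simp: dist_real_def)
        have re: "\<bar>Re v * ((\<Sum>i<n. p i w) - (\<Sum>i. p i w))\<bar> \<le> norm v * (e / 2)"
          and im: "\<bar>Im v * ((\<Sum>i<n. q i w) - (\<Sum>i. q i w))\<bar> \<le> norm v * (e / 2)"
          unfolding abs_mult using \<open>e > 0\<close> by (intro mult_mono p q abs_Re_le_cmod abs_Im_le_cmod; simp)+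
        from order_trans[OF abs_triangle_ineq add_mono[OF re im]]
        show "norm ((\<Sum>i<n. Re v * p i w + Im v * q i w) -
            (Re v * (\<Sum>k. p k w) + Im v * (\<Sum>k. q k w))) \<le> e * norm v"
          by (simp add: sum.distrib sum_distrib_left algebra_simps)
      qed
    qed
  qed
  then obtain G where G: "\<And>w. w \<in> T \<Longrightarrow> (\<lambda>n. g n w) sums G w"
    and G': "(G has_derivative (\<lambda>v. Re v * (\<Sum>k. p k z) + Im v * (\<Sum>k. q k z))) (at z)"
    using T(1,3) at_within_open by metis
  show ?thesis
    by (rule has_derivative_transform_within_open[OF G' T(1,3)]) (use G sums_unique in auto)
qed

lemma harmonic_on_suminf:
  fixes g gx gy gxx gxy gyx gyy :: "nat \<Rightarrow> complex \<Rightarrow> real"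
  assumes "open S"
    and "\<And>k z. z \<in> S \<Longrightarrow> (g k has_derivative (\<lambda>w. Re w * gx k z + Im w * gy k z)) (at z)"
      "\<And>k z. z \<in> S \<Longrightarrow> (gx k has_derivative (\<lambda>w. Re w * gxx k z + Im w * gxy k z)) (at z)"
      "\<And>k z. z \<in> S \<Longrightarrow> (gy k has_derivative (\<lambda>w. Re w * gyx k z + Im w * gyy k z)) (at z)"
    and "\<And>k. continuous_on S (gxx k)" "\<And>k. continuous_on S (gxy k)"
      "\<And>k. continuous_on S (gyx k)" "\<And>k. continuous_on S (gyy k)"
    and "\<And>k z. z \<in> S \<Longrightarrow> gxx k z + gyy k z = 0"
    and "\<forall>f\<in>{g, gx, gy, gxx, gxy, gyx, gyy}. locally_summably_bounded S f"
  shows "harmonic_on (\<lambda>z. \<Sum>k. g k z) S"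
  unfolding harmonic_on_def
proof (intro conjI exI ballI)
  note deriv = has_derivative_suminf_locally_bounded[OF \<open>open S\<close>]
  fix z assume z: "z \<in> S"
  show "((\<lambda>z. \<Sum>k. g k z) has_derivative (\<lambda>w. Re w * (\<Sum>k. gx k z) + Im w * (\<Sum>k. gy k z))) (at z)"
       "((\<lambda>z. \<Sum>k. gx k z) has_derivative (\<lambda>w. Re w * (\<Sum>k. gxx k z) + Im w * (\<Sum>k. gxy k z))) (at z)"
       "((\<lambda>z. \<Sum>k. gy k z) has_derivative (\<lambda>w. Re w * (\<Sum>k. gyx k z) + Im w * (\<Sum>k. gyy k z))) (at z)"
    using assms by (auto intro!: deriv z)
  show "(\<Sum>k. gxx k z) + (\<Sum>k. gyy k z) = 0"
    using assms z by (subst suminf_add) (auto intro!: locally_summably_bounded_summable)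
qed (use assms in \<open>auto intro!: continuous_on_suminf_locally_bounded\<close>)

section \<open>Harmonic functions composed with powers\<close>

text \<open>
  Partial derivatives of \<open>u \<circ> f\<close> for holomorphic \<open>f\<close> with \<open>f' = a + ib\<close>: by the Cauchy--Riemann
  equations \<open>(u \<circ> f)\<^sub>x = a u\<^sub>x(f) + b u\<^sub>y(f)\<close> and \<open>(u \<circ> f)\<^sub>y = -b u\<^sub>x(f) + a u\<^sub>y(f)\<close>.
\<close>

definition comp_dx :: "(complex \<Rightarrow> complex) \<Rightarrow> (complex \<Rightarrow> complex) \<Rightarrow> (complex \<Rightarrow> real) \<Rightarrow> (complex \<Rightarrow> real) \<Rightarrow> complex \<Rightarrow> real" where
  "comp_dx f f' ux uy z = Re (f' z) * ux (f z) + Im (f' z) * uy (f z)"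

definition comp_dy :: "(complex \<Rightarrow> complex) \<Rightarrow> (complex \<Rightarrow> complex) \<Rightarrow> (complex \<Rightarrow> real) \<Rightarrow> (complex \<Rightarrow> real) \<Rightarrow> complex \<Rightarrow> real" where
  "comp_dy f f' ux uy z = - Im (f' z) * ux (f z) + Re (f' z) * uy (f z)"

lemma has_derivative_comp_holomorphic:
  assumes "(u has_derivative (\<lambda>w. Re w * ux (f z) + Im w * uy (f z))) (at (f z))"
    and "(f has_field_derivative f' z) (at z)"
  shows "((\<lambda>z. u (f z)) has_derivative (\<lambda>w. Re w * comp_dx f f' ux uy z + Im w * comp_dy f f' ux uy z)) (at z)"
  using has_derivative_compose[OF has_field_derivative_imp_has_derivative[OF assms(2)] assms(1)]
  by (rule has_derivative_eq_rhs) (auto simp: comp_dx_def comp_dy_def algebra_simps)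

lemma has_derivative_comp_dx_dy:
  assumes ux: "(ux has_derivative (\<lambda>w. Re w * uxx (f z) + Im w * uxy (f z))) (at (f z))"
    and uy: "(uy has_derivative (\<lambda>w. Re w * uyx (f z) + Im w * uyy (f z))) (at (f z))"
    and f': "(f has_field_derivative f' z) (at z)" and f'': "(f' has_field_derivative f'' z) (at z)"
  shows "(comp_dx f f' ux uy has_derivative (\<lambda>w.
            Re w * (comp_dx f f'' ux uy z + Re (f' z) * comp_dx f f' uxx uxy z + Im (f' z) * comp_dx f f' uyx uyy z) +
            Im w * (comp_dy f f'' ux uy z + Re (f' z) * comp_dy f f' uxx uxy z + Im (f' z) * comp_dy f f' uyx uyy z))) (at z)" (is ?dx)
    and "(comp_dy f f' ux uy has_derivative (\<lambda>w.
            Re w * (comp_dy f f'' ux uy z + - Im (f' z) * comp_dx f f' uxx uxy z + Re (f' z) * comp_dx f f' uyx uyy z) +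
            Im w * (- comp_dx f f'' ux uy z + - Im (f' z) * comp_dy f f' uxx uxy z + Re (f' z) * comp_dy f f' uyx uyy z))) (at z)" (is ?dy)
proof -
  note f'D = has_field_derivative_imp_has_derivative[OF f']
  note f''D = has_field_derivative_imp_has_derivative[OF f'']
  note Ux = has_derivative_compose[OF f'D ux] and Uy = has_derivative_compose[OF f'D uy]
  note Re = has_derivative_Re[OF f''D] and Im = has_derivative_Im[OF f''D]
  show ?dx
    unfolding comp_dx_def[abs_def]
    using has_derivative_add[OF has_derivative_mult[OF Re Ux] has_derivative_mult[OF Im Uy]]
    by (rule has_derivative_eq_rhs) (auto simp: comp_dx_def comp_dy_def algebra_simps)
  show ?dy
    unfolding comp_dy_def[abs_def]
    using has_derivative_add[OF has_derivative_mult[OF has_derivative_minus[OF Im] Ux] has_derivative_mult[OF Re Uy]]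
    by (rule has_derivative_eq_rhs) (auto simp: comp_dx_def comp_dy_def algebra_simps)
qed

lemma laplacian_comp_holomorphic:
  "(comp_dx f f'' ux uy z + Re (f' z) * comp_dx f f' uxx uxy z + Im (f' z) * comp_dx f f' uyx uyy z) +
   (- comp_dx f f'' ux uy z + - Im (f' z) * comp_dy f f' uxx uxy z + Re (f' z) * comp_dy f f' uyx uyy z)
   = (norm (f' z))\<^sup>2 * (uxx (f z) + uyy (f z))"
  unfolding cmod_power2 by (simp add: comp_dx_def comp_dy_def algebra_simps power2_eq_square)

lemma abs_comp_dx_le:
  assumes "norm (g z) \<le> p" "\<bar>a (f z)\<bar> \<le> M" "\<bar>b (f z)\<bar> \<le> M"
  shows "\<bar>comp_dx f g a b z\<bar> \<le> 2 * p * M" "\<bar>comp_dy f g a b z\<bar> \<le> 2 * p * M"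
proof -
  have "\<bar>Re (g z) * a (f z)\<bar> \<le> p * M" "\<bar>Re (g z) * b (f z)\<bar> \<le> p * M"
    "\<bar>- Im (g z) * a (f z)\<bar> \<le> p * M" "\<bar>Im (g z) * b (f z)\<bar> \<le> p * M"
    unfolding abs_mult abs_minus using assms abs_Re_le_cmod[of "g z"] abs_Im_le_cmod[of "g z"]
    by (auto intro!: mult_mono)
  then show "\<bar>comp_dx f g a b z\<bar> \<le> 2 * p * M" "\<bar>comp_dy f g a b z\<bar> \<le> 2 * p * M"
    unfolding comp_dx_def comp_dy_def by (auto intro!: order_trans[OF abs_triangle_ineq])
qed

text \<open>The second partials of \<open>u \<circ> f\<close> computed above have the form \<open>X + aY + bZ\<close> with \<open>a, b\<close>
  components of \<open>\<plusminus>f'\<close> and \<open>X, Y, Z\<close> first-order expressions.\<close>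

lemma abs_second_partial_le:
  fixes X Y Z a b p q M :: real
  assumes "\<bar>X\<bar> \<le> 2 * q * M" "\<bar>a\<bar> \<le> p" "\<bar>b\<bar> \<le> p" "\<bar>Y\<bar> \<le> 2 * p * M" "\<bar>Z\<bar> \<le> 2 * p * M"
    and "p * p \<le> q" "0 \<le> M"
  shows "\<bar>X + a * Y + b * Z\<bar> \<le> 6 * q * M"
proof -
  have "\<bar>a * Y\<bar> \<le> p * (2 * p * M)" "\<bar>b * Z\<bar> \<le> p * (2 * p * M)"
    unfolding abs_mult using assms by (auto intro!: mult_mono)
  moreover have "p * (2 * p * M) \<le> 2 * q * M"
    using mult_right_mono[OF assms(6) assms(7)] by (simp add: algebra_simps)
  ultimately show ?thesis
    using assms(1) abs_triangle_ineq[of "X + a * Y" "b * Z"] abs_triangle_ineq[of X "a * Y"] by linarith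
qed

lemma comp_partials_bounded:
  assumes "norm (f' z) \<le> p" "norm (f'' z) \<le> q" "p * p \<le> q" "p \<le> q" "0 \<le> M"
    and "\<forall>u\<in>{ux, uy, uxx, uxy, uyx, uyy}. \<bar>u (f z)\<bar> \<le> M"
  shows "\<bar>comp_dx f f' ux uy z\<bar> \<le> 6 * q * M" "\<bar>comp_dy f f' ux uy z\<bar> \<le> 6 * q * M"
    "\<bar>comp_dx f f'' ux uy z + Re (f' z) * comp_dx f f' uxx uxy z + Im (f' z) * comp_dx f f' uyx uyy z\<bar> \<le> 6 * q * M"
    "\<bar>comp_dy f f'' ux uy z + Re (f' z) * comp_dy f f' uxx uxy z + Im (f' z) * comp_dy f f' uyx uyy z\<bar> \<le> 6 * q * M"
    "\<bar>comp_dy f f'' ux uy z + - Im (f' z) * comp_dx f f' uxx uxy z + Re (f' z) * comp_dx f f' uyx uyy z\<bar> \<le> 6 * q * M"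
    "\<bar>- comp_dx f f'' ux uy z + - Im (f' z) * comp_dy f f' uxx uxy z + Re (f' z) * comp_dy f f' uyx uyy z\<bar> \<le> 6 * q * M"
proof -
  have u: "\<bar>ux (f z)\<bar> \<le> M" "\<bar>uy (f z)\<bar> \<le> M" "\<bar>uxx (f z)\<bar> \<le> M" "\<bar>uxy (f z)\<bar> \<le> M"
    "\<bar>uyx (f z)\<bar> \<le> M" "\<bar>uyy (f z)\<bar> \<le> M" using assms(6) by auto
  have Re: "\<bar>Re (f' z)\<bar> \<le> p" "\<bar>- Re (f' z)\<bar> \<le> p" and Im: "\<bar>Im (f' z)\<bar> \<le> p" "\<bar>- Im (f' z)\<bar> \<le> p"
    using abs_Re_le_cmod[of "f' z"] abs_Im_le_cmod[of "f' z"] assms(1) by auto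
  note d0 = abs_comp_dx_le[of f' z p ux f M uy, OF assms(1) u(1,2)]
    and d1 = abs_comp_dx_le[of f'' z q ux f M uy, OF assms(2) u(1,2)]
    and d2 = abs_comp_dx_le[of f' z p uxx f M uxy, OF assms(1) u(3,4)]
    and d3 = abs_comp_dx_le[of f' z p uyx f M uyy, OF assms(1) u(5,6)]
  have d1': "\<bar>- comp_dx f f'' ux uy z\<bar> \<le> 2 * q * M" using d1(1) by simp
  have "0 \<le> q" using assms(3) zero_le_square[of p] by linarith
  then have "2 * p * M \<le> 6 * q * M"
    using mult_right_mono[OF assms(4,5)] mult_nonneg_nonneg[of q M] assms(5) by linarith
  then show "\<bar>comp_dx f f' ux uy z\<bar> \<le> 6 * q * M" "\<bar>comp_dy f f' ux uy z\<bar> \<le> 6 * q * M"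
    using d0 by linarith+
  note second = abs_second_partial_le[OF _ _ _ _ _ assms(3,5)]
  show "\<bar>comp_dx f f'' ux uy z + Re (f' z) * comp_dx f f' uxx uxy z + Im (f' z) * comp_dx f f' uyx uyy z\<bar> \<le> 6 * q * M"
    "\<bar>comp_dy f f'' ux uy z + Re (f' z) * comp_dy f f' uxx uxy z + Im (f' z) * comp_dy f f' uyx uyy z\<bar> \<le> 6 * q * M"
    "\<bar>comp_dy f f'' ux uy z + - Im (f' z) * comp_dx f f' uxx uxy z + Re (f' z) * comp_dx f f' uyx uyy z\<bar> \<le> 6 * q * M"
    "\<bar>- comp_dx f f'' ux uy z + - Im (f' z) * comp_dy f f' uxx uxy z + Re (f' z) * comp_dy f f' uyx uyy z\<bar> \<le> 6 * q * M"
    by (rule second, (rule Re Im d1 d1' d2 d3)+)+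
qed

lemma norm_power_derivatives_le:
  fixes w :: complex and \<rho> :: real
  assumes "norm w \<le> \<rho>" "0 < \<rho>" "\<rho> \<le> 1"
  shows "norm (w ^ n) \<le> \<rho> ^ n"
    and "norm (of_nat n * w ^ (n - 1)) \<le> real n * \<rho> ^ n / \<rho>"
    and "norm (of_nat n * of_nat (n - 1) * w ^ (n - 2)) \<le> real n ^ 2 * \<rho> ^ n / \<rho> ^ 2"
proof -
  have power_diff_le: "\<rho> ^ (n - m) \<le> \<rho> ^ n / \<rho> ^ m" for m
  proof (cases "m \<le> n")
    case True
    then show ?thesis using assms by (simp add: power_diff)
  next
    case False
    then have "\<rho> ^ m \<le> \<rho> ^ n" using assms by (intro power_decreasing) auto
    then show ?thesis using assms False by simp
  qed
  have w: "norm w ^ m \<le> \<rho> ^ m" for m using assms by (intro power_mono) auto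
  show "norm (w ^ n) \<le> \<rho> ^ n" using w by (simp add: norm_power)
  have "norm (of_nat n * w ^ (n - 1)) \<le> real n * \<rho> ^ (n - 1)"
    unfolding norm_mult norm_power norm_of_nat by (intro mult_left_mono w) auto
  also have "\<dots> \<le> real n * (\<rho> ^ n / \<rho> ^ 1)" by (intro mult_left_mono power_diff_le) auto
  finally show "norm (of_nat n * w ^ (n - 1)) \<le> real n * \<rho> ^ n / \<rho>" by simp
  have "norm (of_nat n * of_nat (n - 1) * w ^ (n - 2)) \<le> real n * real n * \<rho> ^ (n - 2)"
    unfolding norm_mult norm_power norm_of_nat by (intro mult_mono w) auto
  also have "\<dots> \<le> real n * real n * (\<rho> ^ n / \<rho> ^ 2)" by (intro mult_left_mono power_diff_le) auto
  finally show "norm (of_nat n * of_nat (n - 1) * w ^ (n - 2)) \<le> real n ^ 2 * \<rho> ^ n / \<rho> ^ 2"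
    by (simp add: power2_eq_square)
qed

lemma locally_summably_bounded_unit_discI:
  fixes g :: "nat \<Rightarrow> complex \<Rightarrow> 'a::real_normed_vector"
  assumes "\<And>\<rho>. 0 < \<rho> \<Longrightarrow> \<rho> < 1 \<Longrightarrow> \<exists>M. summable M \<and> (\<forall>k. \<forall>w\<in>ball 0 \<rho>. norm (g k w) \<le> M k)"
  shows "locally_summably_bounded (ball 0 1) g"
  unfolding locally_summably_bounded_def
proof
  fix z :: complex assume "z \<in> ball 0 1"
  then have \<rho>: "0 < (1 + norm z) / 2" "(1 + norm z) / 2 < 1" by (auto intro: add_pos_nonneg)
  have "ball z ((1 - norm z) / 2) \<subseteq> ball 0 ((1 + norm z) / 2)"
  proof
    fix w assume "w \<in> ball z ((1 - norm z) / 2)"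
    then have "norm (w - z) < (1 - norm z) / 2" by (simp add: dist_norm norm_minus_commute)
    then show "w \<in> ball 0 ((1 + norm z) / 2)" using norm_triangle_ineq2[of w z] by simp
  qed
  moreover have "(1 - norm z) / 2 > 0" using \<open>z \<in> ball 0 1\<close> by simp
  ultimately show "\<exists>e>0. \<exists>M. summable M \<and> (\<forall>k. \<forall>w\<in>ball z e. norm (g k w) \<le> M k)"
    using assms[OF \<rho>] by blast
qed

lemma power_comp_partials_bounded:
  fixes w :: complex and N :: nat and \<rho> M :: real
  defines "f \<equiv> \<lambda>z. z ^ N" and "f' \<equiv> \<lambda>z. of_nat N * z ^ (N - 1)"
    and "f'' \<equiv> \<lambda>z. of_nat N * of_nat (N - 1) * z ^ (N - 2)"
    and "R \<equiv> real N ^ 2 * \<rho> ^ N / \<rho> ^ 2"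
  assumes "norm w \<le> \<rho>" "0 < \<rho>" "\<rho> \<le> 1" "1 \<le> N" "0 \<le> M"
    and "\<forall>u\<in>{ux, uy, uxx, uxy, uyx, uyy}. \<forall>v\<in>cball 0 \<rho>. \<bar>u v\<bar> \<le> M"
  shows "\<bar>comp_dx f f' ux uy w\<bar> \<le> 6 * R * M" "\<bar>comp_dy f f' ux uy w\<bar> \<le> 6 * R * M"
    "\<bar>comp_dx f f'' ux uy w + Re (f' w) * comp_dx f f' uxx uxy w + Im (f' w) * comp_dx f f' uyx uyy w\<bar> \<le> 6 * R * M"
    "\<bar>comp_dy f f'' ux uy w + Re (f' w) * comp_dy f f' uxx uxy w + Im (f' w) * comp_dy f f' uyx uyy w\<bar> \<le> 6 * R * M"
    "\<bar>comp_dy f f'' ux uy w + - Im (f' w) * comp_dx f f' uxx uxy w + Re (f' w) * comp_dx f f' uyx uyy w\<bar> \<le> 6 * R * M"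
    "\<bar>- comp_dx f f'' ux uy w + - Im (f' w) * comp_dy f f' uxx uxy w + Re (f' w) * comp_dy f f' uyx uyy w\<bar> \<le> 6 * R * M"
proof -
  define p where "p = real N * \<rho> ^ N / \<rho>"
  note bounds = norm_power_derivatives_le[OF assms(5-7), of N]
  have "\<rho> ^ N \<le> \<rho>" using assms(6-8) by (metis power_decreasing power_one_right less_imp_le)
  then have "norm (f w) \<le> \<rho>" using bounds(1) by (simp add: f_def)
  then have u: "\<forall>u\<in>{ux, uy, uxx, uxy, uyx, uyy}. \<bar>u (f w)\<bar> \<le> M" using assms(10) by auto
  have "\<rho> ^ N * \<rho> ^ N \<le> \<rho> ^ N" using assms(6,7) by (simp add: mult_left_le power_le_one)
  then have pp: "p * p \<le> R"
    using assms(6) by (simp add: p_def R_def power2_eq_square field_simps mult_left_mono)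
  have pR: "p \<le> R"
  proof -
    have "real N * \<rho> \<le> real N ^ 2" using assms(6-8) by (simp add: power2_eq_square mult_mono)
    from mult_right_mono[OF this, of "\<rho> ^ N"]
    have "real N * \<rho> ^ N * \<rho> \<le> real N ^ 2 * \<rho> ^ N" using assms(6) by (simp add: algebra_simps)
    then show ?thesis using assms(6) by (simp add: p_def R_def power2_eq_square field_simps)
  qed
  have f': "norm (f' w) \<le> p" and f'': "norm (f'' w) \<le> R"
    using bounds(2,3) by (simp_all add: f'_def f''_def p_def R_def)
  show "\<bar>comp_dx f f' ux uy w\<bar> \<le> 6 * R * M" "\<bar>comp_dy f f' ux uy w\<bar> \<le> 6 * R * M"
    "\<bar>comp_dx f f'' ux uy w + Re (f' w) * comp_dx f f' uxx uxy w + Im (f' w) * comp_dx f f' uyx uyy w\<bar> \<le> 6 * R * M"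
    "\<bar>comp_dy f f'' ux uy w + Re (f' w) * comp_dy f f' uxx uxy w + Im (f' w) * comp_dy f f' uyx uyy w\<bar> \<le> 6 * R * M"
    "\<bar>comp_dy f f'' ux uy w + - Im (f' w) * comp_dx f f' uxx uxy w + Re (f' w) * comp_dx f f' uyx uyy w\<bar> \<le> 6 * R * M"
    "\<bar>- comp_dx f f'' ux uy w + - Im (f' w) * comp_dy f f' uxx uxy w + Re (f' w) * comp_dy f f' uyx uyy w\<bar> \<le> 6 * R * M"
    using comp_partials_bounded[of f' w p f'' R M ux uy uxx uxy uyx uyy f, OF f' f'' pp pR assms(9) u]
    by blast+
qed

lemma continuous_family_bounded:
  fixes U :: "('a::topological_space \<Rightarrow> real) set"
  assumes "finite U" "compact K" "\<forall>u\<in>U. continuous_on K u"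
  shows "\<exists>M\<ge>0. \<forall>u\<in>U. \<forall>v\<in>K. \<bar>u v\<bar> \<le> M"
proof -
  have "continuous_on K (\<lambda>v. \<Sum>u\<in>U. \<bar>u v\<bar>)"
    using assms(3) by (intro continuous_intros) auto
  then obtain M where "0 \<le> M" and M: "\<And>v. v \<in> K \<Longrightarrow> norm (\<Sum>u\<in>U. \<bar>u v\<bar>) \<le> M"
    using continuous_on_compact_bound[OF assms(2)] by blast
  have "\<bar>u v\<bar> \<le> M" if "u \<in> U" "v \<in> K" for u v
    using member_le_sum[of u U "\<lambda>u. \<bar>u v\<bar>"] M[OF that(2)] that(1) assms(1) by simp
  with \<open>0 \<le> M\<close> show ?thesis by blast
qed

lemma power_comp_families_locally_bounded:
  fixes h ux uy uxx uxy uyx uyy :: "complex \<Rightarrow> real" and c :: "nat \<Rightarrow> real" and N :: "nat \<Rightarrow> nat"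
  defines "f \<equiv> \<lambda>k (z::complex). z ^ N k" and "f' \<equiv> \<lambda>k (z::complex). of_nat (N k) * z ^ (N k - 1)"
    and "f'' \<equiv> \<lambda>k (z::complex). of_nat (N k) * of_nat (N k - 1) * z ^ (N k - 2)"
  assumes cont: "\<forall>u\<in>{ux, uy, uxx, uxy, uyx, uyy}. continuous_on (ball 0 1) u"
    and hB: "\<forall>w\<in>ball 0 1. \<bar>h w\<bar> \<le> B * norm w"
    and c: "\<And>k. 0 \<le> c k" and N: "\<And>k. 1 \<le> N k"
    and summable: "\<And>\<rho>. 0 < \<rho> \<Longrightarrow> \<rho> < 1 \<Longrightarrow> summable (\<lambda>k. c k * real (N k) ^ 2 * \<rho> ^ N k)"
  shows "\<forall>G\<in>{\<lambda>k z. c k * h (f k z), \<lambda>k z. c k * comp_dx (f k) (f' k) ux uy z,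
      \<lambda>k z. c k * comp_dy (f k) (f' k) ux uy z,
      \<lambda>k z. c k * (comp_dx (f k) (f'' k) ux uy z
        + Re (f' k z) * comp_dx (f k) (f' k) uxx uxy z + Im (f' k z) * comp_dx (f k) (f' k) uyx uyy z),
      \<lambda>k z. c k * (comp_dy (f k) (f'' k) ux uy z
        + Re (f' k z) * comp_dy (f k) (f' k) uxx uxy z + Im (f' k z) * comp_dy (f k) (f' k) uyx uyy z),
      \<lambda>k z. c k * (comp_dy (f k) (f'' k) ux uy z
        + - Im (f' k z) * comp_dx (f k) (f' k) uxx uxy z + Re (f' k z) * comp_dx (f k) (f' k) uyx uyy z),
      \<lambda>k z. c k * (- comp_dx (f k) (f'' k) ux uy z
        + - Im (f' k z) * comp_dy (f k) (f' k) uxx uxy z + Re (f' k z) * comp_dy (f k) (f' k) uyx uyy z)}. locally_summably_bounded (ball 0 1) G"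
    (is "\<forall>G\<in>?F. _")
proof (intro ballI locally_summably_bounded_unit_discI)
  fix G and \<rho> :: real
  assume G: "G \<in> ?F" and \<rho>: "0 < \<rho>" "\<rho> < 1"
  have sub: "cball 0 \<rho> \<subseteq> ball (0::complex) 1" using \<rho> by auto
  have cont_cball: "\<forall>u\<in>{ux, uy, uxx, uxy, uyx, uyy}. continuous_on (cball 0 \<rho>) u"
    using cont by (simp add: continuous_on_subset[OF _ sub])
  from continuous_family_bounded[OF _ compact_cball cont_cball] obtain M where "0 \<le> M"
    and M: "\<forall>u\<in>{ux, uy, uxx, uxy, uyx, uyy}. \<forall>v\<in>cball 0 \<rho>. \<bar>u v\<bar> \<le> M"
    by auto
  define R where "R k = real (N k) ^ 2 * \<rho> ^ N k / \<rho> ^ 2" for k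
  have "\<bar>G k w\<bar> \<le> (6 * M + \<bar>B\<bar>) * (c k * R k)" if "w \<in> ball 0 \<rho>" for k w
  proof -
    have w: "norm w \<le> \<rho>" using that by simp
    have R: "\<rho> ^ N k \<le> R k" "0 \<le> R k"
    proof -
      have "\<rho> ^ 2 \<le> 1" using \<rho> by (simp add: power_le_one)
      moreover have "1 \<le> real (N k) ^ 2" using N[of k] by (simp add: one_le_power)
      ultimately have "\<rho> ^ 2 \<le> real (N k) ^ 2" by linarith
      from mult_right_mono[OF this, of "\<rho> ^ N k"]
      have "\<rho> ^ 2 * \<rho> ^ N k \<le> real (N k) ^ 2 * \<rho> ^ N k" using \<rho> by simp
      then show "\<rho> ^ N k \<le> R k" using \<rho> by (simp add: R_def field_simps)
      show "0 \<le> R k" using \<rho> by (simp add: R_def)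
    qed
    have "norm w < 1" using that \<rho> by simp
    then have "f k w \<in> ball 0 1" using N[of k] by (simp add: f_def norm_power power_less_one_iff)
    then have "\<bar>h (f k w)\<bar> \<le> B * norm (f k w)" using hB by blast
    also have "\<dots> \<le> \<bar>B\<bar> * R k"
    proof (rule mult_mono)
      show "norm (f k w) \<le> R k"
        using norm_power_derivatives_le(1)[OF w \<rho>(1), of "N k"] R(1) \<rho> by (simp add: f_def)
    qed (use R(2) in auto)
    also have "\<dots> \<le> (6 * M + \<bar>B\<bar>) * R k"
      using \<open>0 \<le> M\<close> R(2) by (intro mult_right_mono) auto
    finally have hb: "\<bar>h (f k w)\<bar> \<le> (6 * M + \<bar>B\<bar>) * R k" .
    have pb: "\<bar>comp_dx (f k) (f' k) ux uy w\<bar> \<le> 6 * R k * M" "\<bar>comp_dy (f k) (f' k) ux uy w\<bar> \<le> 6 * R k * M"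
      "\<bar>comp_dx (f k) (f'' k) ux uy w + Re (f' k w) * comp_dx (f k) (f' k) uxx uxy w + Im (f' k w) * comp_dx (f k) (f' k) uyx uyy w\<bar> \<le> 6 * R k * M"
      "\<bar>comp_dy (f k) (f'' k) ux uy w + Re (f' k w) * comp_dy (f k) (f' k) uxx uxy w + Im (f' k w) * comp_dy (f k) (f' k) uyx uyy w\<bar> \<le> 6 * R k * M"
      "\<bar>comp_dy (f k) (f'' k) ux uy w + - Im (f' k w) * comp_dx (f k) (f' k) uxx uxy w + Re (f' k w) * comp_dx (f k) (f' k) uyx uyy w\<bar> \<le> 6 * R k * M"
      "\<bar>- comp_dx (f k) (f'' k) ux uy w + - Im (f' k w) * comp_dy (f k) (f' k) uxx uxy w + Re (f' k w) * comp_dy (f k) (f' k) uyx uyy w\<bar> \<le> 6 * R k * M"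
      using power_comp_partials_bounded[OF w \<rho>(1) less_imp_le[OF \<rho>(2)] N[of k] \<open>0 \<le> M\<close> M]
      unfolding f_def f'_def f''_def R_def by blast+
    have "6 * R k * M \<le> (6 * M + \<bar>B\<bar>) * R k" using R(2) by (simp add: algebra_simps)
    note X = hb pb[THEN order_trans, OF this]
    have scale: "\<bar>c k * X\<bar> \<le> (6 * M + \<bar>B\<bar>) * (c k * R k)" if "\<bar>X\<bar> \<le> (6 * M + \<bar>B\<bar>) * R k" for X
      using mult_left_mono[OF that c[of k]] c[of k] by (simp add: abs_mult mult_ac)
    from G show ?thesis by (auto intro!: scale X[simplified])
  qed
  moreover have "summable (\<lambda>k. (6 * M + \<bar>B\<bar>) * (c k * R k))"
    using summable_mult[OF summable[OF \<rho>], of "(6 * M + \<bar>B\<bar>) / \<rho> ^ 2"]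
    by (simp add: R_def mult.assoc)
  ultimately show "\<exists>M. summable M \<and> (\<forall>k. \<forall>w\<in>ball 0 \<rho>. norm (G k w) \<le> M k)"
    unfolding real_norm_def by blast
qed

lemma harmonic_on_suminf_powers:
  fixes h :: "complex \<Rightarrow> real" and c :: "nat \<Rightarrow> real" and N :: "nat \<Rightarrow> nat"
  assumes "harmonic_on h (ball 0 1)" and hB: "\<forall>w\<in>ball 0 1. \<bar>h w\<bar> \<le> B * norm w"
    and c: "\<And>k. 0 \<le> c k" and N: "\<And>k. 1 \<le> N k"
    and summable: "\<And>\<rho>. 0 < \<rho> \<Longrightarrow> \<rho> < 1 \<Longrightarrow> summable (\<lambda>k. c k * real (N k) ^ 2 * \<rho> ^ N k)"
  shows "harmonic_on (\<lambda>z. \<Sum>k. c k * h (z ^ N k)) (ball 0 1)"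
proof -
  obtain ux uy uxx uxy uyx uyy where
    h': "\<forall>z\<in>ball 0 1. (h has_derivative (\<lambda>w. Re w * ux z + Im w * uy z)) (at z)"
    and ux': "\<forall>z\<in>ball 0 1. (ux has_derivative (\<lambda>w. Re w * uxx z + Im w * uxy z)) (at z)"
    and uy': "\<forall>z\<in>ball 0 1. (uy has_derivative (\<lambda>w. Re w * uyx z + Im w * uyy z)) (at z)"
    and cont: "continuous_on (ball 0 1) uxx" "continuous_on (ball 0 1) uxy"
      "continuous_on (ball 0 1) uyx" "continuous_on (ball 0 1) uyy"
    and lap: "\<forall>z\<in>ball 0 1. uxx z + uyy z = 0"
    using assms(1) unfolding harmonic_on_def by blast
  have cont': "continuous_on (ball 0 1) ux" "continuous_on (ball 0 1) uy"
    using ux' uy' by (auto intro!: continuous_at_imp_continuous_on has_derivative_continuous)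
  define f where "f = (\<lambda>k (z::complex). z ^ N k)"
  define f' where "f' = (\<lambda>k (z::complex). of_nat (N k) * z ^ (N k - 1))"
  define f'' where "f'' = (\<lambda>k (z::complex). of_nat (N k) * of_nat (N k - 1) * z ^ (N k - 2))"
  define g where "g = (\<lambda>k z. c k * h (f k z))"
  define gx where "gx = (\<lambda>k z. c k * comp_dx (f k) (f' k) ux uy z)"
  define gy where "gy = (\<lambda>k z. c k * comp_dy (f k) (f' k) ux uy z)"
  define gxx where "gxx = (\<lambda>k z. c k * (comp_dx (f k) (f'' k) ux uy z
    + Re (f' k z) * comp_dx (f k) (f' k) uxx uxy z + Im (f' k z) * comp_dx (f k) (f' k) uyx uyy z))"
  define gxy where "gxy = (\<lambda>k z. c k * (comp_dy (f k) (f'' k) ux uy z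
    + Re (f' k z) * comp_dy (f k) (f' k) uxx uxy z + Im (f' k z) * comp_dy (f k) (f' k) uyx uyy z))"
  define gyx where "gyx = (\<lambda>k z. c k * (comp_dy (f k) (f'' k) ux uy z
    + - Im (f' k z) * comp_dx (f k) (f' k) uxx uxy z + Re (f' k z) * comp_dx (f k) (f' k) uyx uyy z))"
  define gyy where "gyy = (\<lambda>k z. c k * (- comp_dx (f k) (f'' k) ux uy z
    + - Im (f' k z) * comp_dy (f k) (f' k) uxx uxy z + Re (f' k z) * comp_dy (f k) (f' k) uyx uyy z))"
  have f_ball: "f k z \<in> ball 0 1" if "z \<in> ball 0 1" for k z
    using that N[of k] by (simp add: f_def norm_power power_less_one_iff)
  have df: "(f k has_field_derivative f' k z) (at z)" "(f' k has_field_derivative f'' k z) (at z)" for k z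
    unfolding f_def f'_def f''_def
    by (auto intro!: derivative_eq_intros simp: algebra_simps numeral_2_eq_2)
  have comp: "continuous_on (ball 0 1) (\<lambda>z. u (f k z))" if "continuous_on (ball 0 1) u" for u k
    by (rule continuous_on_compose2[OF that _ image_subsetI[OF f_ball]]) (auto simp: f_def intro!: continuous_intros)
  have "harmonic_on (\<lambda>z. \<Sum>k. g k z) (ball 0 1)"
  proof (rule harmonic_on_suminf)
    fix k and z :: complex assume z: "z \<in> ball 0 1"
    show "(g k has_derivative (\<lambda>w. Re w * gx k z + Im w * gy k z)) (at z)"
      unfolding g_def
      using has_derivative_mult_right[OF has_derivative_comp_holomorphic[where f="f k" and f'="f' k" and z=z and ux=ux and uy=uy, OF h'[rule_format, OF f_ball[OF z, of k]] df(1)[of k z]], of "c k"]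
      by (rule has_derivative_eq_rhs) (simp add: gx_def gy_def algebra_simps)
    show "(gx k has_derivative (\<lambda>w. Re w * gxx k z + Im w * gxy k z)) (at z)"
      unfolding gx_def
      using has_derivative_mult_right[OF has_derivative_comp_dx_dy(1)[where f="f k" and f'="f' k" and f''="f'' k" and z=z and uxx=uxx and uxy=uxy and uyx=uyx and uyy=uyy, OF ux'[rule_format, OF f_ball[OF z, of k]] uy'[rule_format, OF f_ball[OF z, of k]] df[of k z]], of "c k"]
      by (rule has_derivative_eq_rhs) (simp add: gxx_def gxy_def algebra_simps)
    show "(gy k has_derivative (\<lambda>w. Re w * gyx k z + Im w * gyy k z)) (at z)"
      unfolding gy_def
      using has_derivative_mult_right[OF has_derivative_comp_dx_dy(2)[where f="f k" and f'="f' k" and f''="f'' k" and z=z and uxx=uxx and uxy=uxy and uyx=uyx and uyy=uyy, OF ux'[rule_format, OF f_ball[OF z, of k]] uy'[rule_format, OF f_ball[OF z, of k]] df[of k z]], of "c k"]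
      by (rule has_derivative_eq_rhs) (simp add: gyx_def gyy_def algebra_simps)
    show "gxx k z + gyy k z = 0"
      unfolding gxx_def gyy_def distrib_left[symmetric] laplacian_comp_holomorphic
      using lap[rule_format, OF f_ball[OF z, of k]] by simp
  next
    fix k
    show "continuous_on (ball 0 1) (gxx k)" "continuous_on (ball 0 1) (gxy k)"
      "continuous_on (ball 0 1) (gyx k)" "continuous_on (ball 0 1) (gyy k)"
      unfolding gxx_def gxy_def gyx_def gyy_def comp_dx_def comp_dy_def
      by (intro continuous_intros comp[OF cont(1)] comp[OF cont(2)] comp[OF cont(3)] comp[OF cont(4)] comp[OF cont'(1)] comp[OF cont'(2)]; simp add: f'_def f''_def continuous_intros)+
  next
    show "\<forall>G\<in>{g, gx, gy, gxx, gxy, gyx, gyy}. locally_summably_bounded (ball 0 1) G"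
      unfolding g_def gx_def gy_def gxx_def gxy_def gyx_def gyy_def f_def f'_def f''_def
      by (rule power_comp_families_locally_bounded[OF _ hB c N summable]) (simp add: cont cont')
  qed (simp_all)
  then show ?thesis by (simp add: g_def f_def)
qed

section \<open>Lacunary series\<close>

lemma summable_of_nat_power_mult_geometric:
  fixes x :: real
  assumes "\<bar>x\<bar> < 1"
  shows "summable (\<lambda>n. real n ^ m * x ^ n)"
  using assms
proof (induction m arbitrary: x)
  case 0
  then show ?case by (simp add: summable_geometric)
next
  case (Suc m)
  have "summable (\<lambda>n. diffs (\<lambda>n. real n ^ m) n * x ^ n)"
    by (rule termdiff_converges[of x 1]) (use Suc in auto)
  then have "summable (\<lambda>n. x * (real (Suc n) ^ Suc m * x ^ n))"
    by (intro summable_mult) (simp add: diffs_def)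
  then have "summable (\<lambda>n. real (Suc n) ^ Suc m * x ^ Suc n)"
    by (simp add: mult_ac)
  then show ?case by (subst summable_Suc_iff[symmetric]) simp
qed

lemma summable_comp_strict_mono:
  fixes f :: "nat \<Rightarrow> real"
  assumes "\<And>n. 0 \<le> f n" "summable f" "strict_mono g"
  shows "summable (\<lambda>n. f (g n))"
proof -
  define f' where "f' n = (if n \<in> range g then f n else 0)" for n
  have "summable f'"
    by (rule summable_comparison_test[OF _ assms(2)]) (auto simp: f'_def assms(1))
  moreover have "summable (\<lambda>n. f' (g n)) \<longleftrightarrow> summable f'"
    by (rule summable_mono_reindex[OF assms(3)]) (simp add: f'_def)
  ultimately show ?thesis by (simp add: f'_def)
qed

lemma summable_lacunary_powers:
  fixes A :: nat and x :: real
  assumes "2 \<le> A" "\<bar>x\<bar> < 1"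
  shows "summable (\<lambda>k. real A ^ k * real (2 ^ A ^ k) ^ 2 * x ^ (2 ^ A ^ k))"
proof (rule summable_comparison_test)
  have mono: "strict_mono (\<lambda>k. (2::nat) ^ A ^ k)"
    using assms(1) by (intro strict_monoI) simp
  show "summable (\<lambda>k. real (2 ^ A ^ k) ^ 3 * \<bar>x\<bar> ^ (2 ^ A ^ k))"
    using summable_comp_strict_mono[OF _ summable_of_nat_power_mult_geometric[of "\<bar>x\<bar>" 3] mono] assms(2)
    by simp
  show "\<exists>N. \<forall>k\<ge>N. norm (real A ^ k * real (2 ^ A ^ k) ^ 2 * x ^ (2 ^ A ^ k))
      \<le> real (2 ^ A ^ k) ^ 3 * \<bar>x\<bar> ^ (2 ^ A ^ k)"
  proof (intro exI allI impI)
    fix k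
    have "A ^ k < 2 ^ A ^ k" by (rule less_exp)
    then have "real A ^ k \<le> real (2 ^ A ^ k)" by (metis less_imp_le of_nat_le_iff of_nat_power)
    then show "norm (real A ^ k * real (2 ^ A ^ k) ^ 2 * x ^ (2 ^ A ^ k))
      \<le> real (2 ^ A ^ k) ^ 3 * \<bar>x\<bar> ^ (2 ^ A ^ k)"
      by (simp add: abs_mult power_abs power3_eq_cube power2_eq_square mult_right_mono)
  qed
qed

definition lacunary_series :: "nat \<Rightarrow> (complex \<Rightarrow> real) \<Rightarrow> complex \<Rightarrow> real" where
  "lacunary_series A h z = (\<Sum>k. real A ^ k * h (z ^ (2 ^ A ^ k)))"

lemma summable_lacunary_series:
  fixes h :: "complex \<Rightarrow> real"
  assumes "\<forall>w\<in>ball 0 1. \<bar>h w\<bar> \<le> B * norm w" "2 \<le> A" "z \<in> ball 0 1"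
  shows "summable (\<lambda>k. real A ^ k * h (z ^ (2 ^ A ^ k)))"
proof (rule summable_comparison_test)
  have "norm z < 1" using assms(3) by simp
  then show "summable (\<lambda>k. \<bar>B\<bar> * (real A ^ k * real (2 ^ A ^ k) ^ 2 * norm z ^ (2 ^ A ^ k)))"
    using summable_lacunary_powers[OF assms(2), of "norm z"] by (intro summable_mult) simp
  show "\<exists>N. \<forall>k\<ge>N. norm (real A ^ k * h (z ^ (2 ^ A ^ k)))
      \<le> \<bar>B\<bar> * (real A ^ k * real (2 ^ A ^ k) ^ 2 * norm z ^ (2 ^ A ^ k))"
  proof (intro exI allI impI)
    fix k
    have in_disc: "z ^ (2 ^ A ^ k) \<in> ball 0 1"
      using \<open>norm z < 1\<close> by (simp add: norm_power power_less_one_iff)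
    have "\<bar>h (z ^ (2 ^ A ^ k))\<bar> \<le> B * norm z ^ (2 ^ A ^ k)"
      using assms(1)[rule_format, OF in_disc] by (simp add: norm_power)
    also have "\<dots> \<le> \<bar>B\<bar> * norm z ^ (2 ^ A ^ k)" by (rule mult_right_mono) auto
    also have "\<dots> \<le> \<bar>B\<bar> * (real (2 ^ A ^ k) ^ 2 * norm z ^ (2 ^ A ^ k))"
    proof (rule mult_left_mono)
      have "1 \<le> real (2 ^ A ^ k) ^ 2" by (simp add: one_le_power)
      from mult_right_mono[OF this, of "norm z ^ (2 ^ A ^ k)"]
      show "norm z ^ (2 ^ A ^ k) \<le> real (2 ^ A ^ k) ^ 2 * norm z ^ (2 ^ A ^ k)" by simp
    qed simp
    finally have "real A ^ k * \<bar>h (z ^ (2 ^ A ^ k))\<bar>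
        \<le> real A ^ k * (\<bar>B\<bar> * (real (2 ^ A ^ k) ^ 2 * norm z ^ (2 ^ A ^ k)))"
      by (rule mult_left_mono) simp
    then show "norm (real A ^ k * h (z ^ (2 ^ A ^ k)))
      \<le> \<bar>B\<bar> * (real A ^ k * real (2 ^ A ^ k) ^ 2 * norm z ^ (2 ^ A ^ k))"
      by (simp add: abs_mult mult_ac)
  qed
qed

lemma harmonic_on_lacunary_series:
  assumes "harmonic_on h (ball 0 1)" "\<forall>w\<in>ball 0 1. \<bar>h w\<bar> \<le> B * norm w" "2 \<le> A"
  shows "harmonic_on (lacunary_series A h) (ball 0 1)"
  unfolding lacunary_series_def[abs_def]
  by (rule harmonic_on_suminf_powers[OF assms(1,2)]) (use summable_lacunary_powers[OF assms(3)] in auto)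

lemma power_le_one_over_mult:
  fixes r :: real
  assumes r: "0 \<le> r" "r < 1" and N: "N \<ge> 1"
  shows "r ^ N \<le> 1 / (real N * (1 - r))"
proof -
  have "real N * r ^ N = (\<Sum>i<N. r ^ N)" by simp
  also have "\<dots> \<le> (\<Sum>i<N. r ^ i)" by (intro sum_mono power_decreasing) (use r in auto)
  finally have "(1 - r) * (real N * r ^ N) \<le> (1 - r) * (\<Sum>i<N. r ^ i)"
    using r by (intro mult_left_mono) auto
  also have "\<dots> = 1 - r ^ N" using r by (simp add: sum_gp_strict)
  also have "\<dots> \<le> 1" using r by simp
  finally show ?thesis using r N by (simp add: field_simps)
qed

lemma double_le_power_two: "4 \<le> A \<Longrightarrow> 2 * A \<le> (2::nat) ^ (A - 1)"
proof (induction A rule: dec_induct)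
  case (step n)
  have "2 * Suc n \<le> 2 * (2 * n)" using step by simp
  also have "\<dots> \<le> 2 * 2 ^ (n - 1)" using step by simp
  also have "\<dots> = 2 ^ (Suc n - 1)" using step by (cases n) auto
  finally show ?case .
qed simp

lemma lacunary_ratio_le:
  fixes A :: nat
  assumes "4 \<le> A"
  shows "real A ^ Suc k / real (2 ^ A ^ Suc k) \<le> 1 / 2 * (real A ^ k / real (2 ^ A ^ k))"
proof -
  have "A - 1 \<le> (A - 1) * A ^ k" using assms by simp
  then have "(2::nat) ^ (A - 1) \<le> 2 ^ ((A - 1) * A ^ k)" by (rule power_increasing) simp
  with double_le_power_two[OF assms] have "2 * A \<le> (2::nat) ^ ((A - 1) * A ^ k)" by linarith
  moreover have "A ^ Suc k = A ^ k + (A - 1) * A ^ k" using assms by (simp add: algebra_simps)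
  ultimately have "2 * A * 2 ^ A ^ k \<le> (2::nat) ^ A ^ Suc k"
    by (simp add: power_add)
  then have "real A ^ k * real (2 * A * 2 ^ A ^ k) \<le> real A ^ k * real (2 ^ A ^ Suc k)"
    by (intro mult_left_mono) (simp_all only: of_nat_le_iff zero_le_power of_nat_0_le_iff)
  then show ?thesis by (simp add: field_simps)
qed

lemma sum_powers_le_twice_last:
  assumes "2 \<le> A"
  shows "(\<Sum>k<Suc n. real A ^ k) \<le> 2 * real A ^ n"
proof (induction n)
  case (Suc n)
  have "2 * real A ^ n \<le> real A ^ Suc n" using assms by (simp add: mult_right_mono)
  then show ?case using Suc by simp
qed simp

lemma summable_lacunary_geometric:
  assumes "2 \<le> A" "0 \<le> r" "r < 1"
  shows "summable (\<lambda>k. real A ^ k * r ^ (2 ^ A ^ k))"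
proof (rule summable_comparison_test[OF _ summable_lacunary_powers[OF assms(1), of r]])
  have "real A ^ k * r ^ (2 ^ A ^ k) \<le> real A ^ k * real (2 ^ A ^ k) ^ 2 * r ^ (2 ^ A ^ k)" for k
  proof (intro mult_right_mono)
    have "real A ^ k * 1 \<le> real A ^ k * real (2 ^ A ^ k) ^ 2"
      by (intro mult_left_mono) (simp_all add: one_le_power)
    then show "real A ^ k \<le> real A ^ k * real (2 ^ A ^ k) ^ 2" by simp
  qed (use assms(2) in simp)
  then show "\<exists>N. \<forall>k\<ge>N. norm (real A ^ k * r ^ (2 ^ A ^ k)) \<le> real A ^ k * real (2 ^ A ^ k) ^ 2 * r ^ (2 ^ A ^ k)"
    using assms(2) by auto
qed (use assms in auto)

lemma lacunary_tail_le:
  fixes A :: nat and r :: real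
  assumes A: "4 \<le> A" and r: "0 \<le> r" "r < 1" and k0: "1 / (1 - r) \<le> real (2 ^ A ^ k0)"
  shows "(\<Sum>j. real A ^ (j + k0) * r ^ (2 ^ A ^ (j + k0))) \<le> 2 * real A ^ k0"
proof -
  define a where "a k = real A ^ k / real (2 ^ A ^ k)" for k
  have a_decay: "a (j + k0) \<le> (1 / 2) ^ j * a k0" for j
  proof (induction j)
    case (Suc j)
    have "a (Suc j + k0) \<le> 1 / 2 * a (j + k0)"
      unfolding a_def using lacunary_ratio_le[OF A, of "j + k0"] by simp
    then show ?case using Suc by simp
  qed simp
  define T where "T = 1 / (1 - r)"
  have T: "1 \<le> T" using r by (simp add: T_def)
  have term_le: "real A ^ (j + k0) * r ^ (2 ^ A ^ (j + k0)) \<le> (1 / 2) ^ j * real A ^ k0" for j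
  proof -
    have "r ^ (2 ^ A ^ (j + k0)) \<le> T / real (2 ^ A ^ (j + k0))"
      using power_le_one_over_mult[OF r, of "2 ^ A ^ (j + k0)"] by (simp add: T_def mult.commute)
    then have "real A ^ (j + k0) * r ^ (2 ^ A ^ (j + k0)) \<le> real A ^ (j + k0) * (T / real (2 ^ A ^ (j + k0)))"
      by (rule mult_left_mono) simp
    also have "\<dots> = a (j + k0) * T" by (simp add: a_def)
    also have "\<dots> \<le> (1 / 2) ^ j * a k0 * T" using a_decay[of j] T by (intro mult_right_mono) auto
    also have "a k0 * T \<le> real A ^ k0"
    proof -
      have "a k0 * T = real A ^ k0 * (T / real (2 ^ A ^ k0))" by (simp add: a_def)
      also have "\<dots> \<le> real A ^ k0 * 1"
        using k0 by (intro mult_left_mono) (simp_all add: T_def[symmetric] divide_le_eq_1)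
      finally show ?thesis by simp
    qed
    then have "(1 / 2) ^ j * a k0 * T \<le> (1 / 2) ^ j * real A ^ k0"
      by (simp add: mult.assoc mult_left_mono)
    finally show ?thesis .
  qed
  have geometric: "summable (\<lambda>j. (1 / 2 :: real) ^ j * real A ^ k0)"
    by (intro summable_mult2 summable_geometric) simp
  have "summable (\<lambda>j. real A ^ (j + k0) * r ^ (2 ^ A ^ (j + k0)))"
    by (rule summable_comparison_test[OF _ geometric]) (use term_le r in auto)
  then have "(\<Sum>j. real A ^ (j + k0) * r ^ (2 ^ A ^ (j + k0))) \<le> (\<Sum>j. (1 / 2 :: real) ^ j * real A ^ k0)"
    by (rule suminf_le[OF term_le _ geometric])
  also have "\<dots> = 2 * real A ^ k0"
    using suminf_mult2[OF summable_geometric[of "1 / 2 :: real"], of "real A ^ k0"] suminf_geometric[of "1 / 2 :: real"]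
    by simp
  finally show ?thesis .
qed

lemma lacunary_head_le:
  fixes A :: nat and r :: real
  assumes "r < 1" "real (2 ^ A ^ m) < 1 / (1 - r)"
  shows "real A ^ m \<le> 2 * ln (1 / (1 - r))"
proof -
  have "real (A ^ m) * ln 2 = ln (real (2 ^ A ^ m))" by (simp add: ln_realpow)
  also have "\<dots> < ln (1 / (1 - r))" using assms by (subst ln_less_cancel_iff) auto
  finally have "real (A ^ m) * ln 2 < ln (1 / (1 - r))" .
  moreover have "real (A ^ m) * (2 / 3) \<le> real (A ^ m) * ln 2"
    using ln2_ge_two_thirds by (intro mult_left_mono) auto
  moreover have "0 \<le> real (A ^ m)" by simp
  ultimately have "real (A ^ m) \<le> 2 * ln (1 / (1 - r))" by linarith
  then show ?thesis by simp
qed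

lemma lacunary_power_sum_le:
  fixes A :: nat and r :: real
  assumes A: "4 \<le> A" and r: "0 \<le> r" "r < 1"
  shows "(\<Sum>k. real A ^ k * r ^ (2 ^ A ^ k)) \<le> (4 + 4 * real A) * (1 + ln (1 / (1 - r)))"
proof -
  define L where "L = ln (1 / (1 - r))"
  have L: "0 \<le> L" using r by (simp add: L_def)
  obtain n where "1 / (1 - r) < 2 ^ n" using real_arch_pow[of 2] by auto
  moreover have "(2::real) ^ n \<le> 2 ^ A ^ n"
    using less_exp[of n] power_mono[of 2 A n] A by (intro power_increasing) auto
  ultimately have "\<exists>k. 1 / (1 - r) \<le> real (2 ^ A ^ k)" by (metis less_imp_le of_nat_numeral of_nat_power order_trans)
  then obtain k0 where k0: "1 / (1 - r) \<le> real (2 ^ A ^ k0)"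
    and below: "\<And>k. k < k0 \<Longrightarrow> real (2 ^ A ^ k) < 1 / (1 - r)"
    unfolding exists_least_iff[of "\<lambda>k. 1 / (1 - r) \<le> real (2 ^ A ^ k)"] by (auto simp: not_le)
  have "(\<Sum>k. real A ^ k * r ^ (2 ^ A ^ k))
      = (\<Sum>j. real A ^ (j + k0) * r ^ (2 ^ A ^ (j + k0))) + (\<Sum>k<k0. real A ^ k * r ^ (2 ^ A ^ k))"
    using A r by (intro suminf_split_initial_segment summable_lacunary_geometric) auto
  also have "\<dots> \<le> 2 * real A ^ k0 + (\<Sum>k<k0. real A ^ k)"
    using r by (intro add_mono lacunary_tail_le[OF A r k0] sum_mono mult_right_le_one_le power_le_one) auto
  also have "\<dots> \<le> (4 + 4 * real A) * (1 + L)"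
  proof (cases k0)
    case 0
    have "4 * 1 \<le> (4 + 4 * real A) * (1 + L)" using L by (intro mult_mono) auto
    then show ?thesis using 0 by simp
  next
    case (Suc m)
    have Am: "real A ^ m \<le> 2 * L" unfolding L_def by (rule lacunary_head_le[OF r(2) below]) (simp add: Suc)
    have "(\<Sum>k<k0. real A ^ k) \<le> 4 * L"
      using sum_powers_le_twice_last[of A m] A Am by (simp add: Suc)
    moreover have "2 * real A ^ k0 \<le> 4 * real A * L"
      using mult_left_mono[OF Am, of "2 * real A"] by (simp add: Suc)
    ultimately show ?thesis using L by (simp add: algebra_simps)
  qed
  finally show ?thesis by (simp add: L_def)
qed

lemma lacunary_series_le:
  fixes h :: "complex \<Rightarrow> real"
  assumes hB: "\<forall>w\<in>ball 0 1. \<bar>h w\<bar> \<le> B * norm w" and "0 \<le> B" "4 \<le> A" "z \<in> ball 0 1"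
  shows "lacunary_series A h z \<le> B * (4 + 4 * real A) * ln (exp 1 / (1 - norm z))"
proof -
  have z: "0 \<le> norm z" "norm z < 1" using assms(4) by auto
  have "lacunary_series A h z \<le> (\<Sum>k. B * (real A ^ k * norm z ^ (2 ^ A ^ k)))"
    unfolding lacunary_series_def
  proof (rule suminf_le)
    fix k
    have "z ^ (2 ^ A ^ k) \<in> ball 0 1" using z by (simp add: norm_power power_less_one_iff)
    from hB[rule_format, OF this] have "h (z ^ (2 ^ A ^ k)) \<le> B * norm z ^ (2 ^ A ^ k)"
      by (simp add: norm_power)
    from mult_left_mono[OF this, of "real A ^ k"]
    show "real A ^ k * h (z ^ (2 ^ A ^ k)) \<le> B * (real A ^ k * norm z ^ (2 ^ A ^ k))"
      by (simp add: mult.left_commute)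
  qed (use summable_lacunary_series[OF hB _ assms(4)] summable_lacunary_geometric[OF _ z] assms(3)
      in \<open>auto intro: summable_mult\<close>)
  also have "\<dots> = B * (\<Sum>k. real A ^ k * norm z ^ (2 ^ A ^ k))"
    using assms(3) z by (intro suminf_mult summable_lacunary_geometric) auto
  also have "\<dots> \<le> B * ((4 + 4 * real A) * (1 + ln (1 / (1 - norm z))))"
    using assms(2,3) z by (intro mult_left_mono lacunary_power_sum_le) auto
  also have "1 + ln (1 / (1 - norm z)) = ln (exp 1 / (1 - norm z))"
    using z by (simp add: ln_div)
  finally show ?thesis by (simp add: mult.assoc)
qed

section \<open>Growth along rays\<close>

lemma root_near_one:
  fixes s :: real
  assumes s: "1 / 6 < s" "s < 1 / 2" and N: "1 \<le> N"
  shows "1 - 3 / real N < root N s" "root N s < 1 - 1 / (2 * real N)"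
proof -
  have exp3: "6 < exp (3::real)"
  proof -
    have "2 ^ 3 \<le> exp (1::real) ^ 3" using exp_ge_add_one_self[of 1] by (intro power_mono) auto
    then show ?thesis by (simp add: exp_of_nat_mult[symmetric])
  qed
  define r where "r = root N s"
  have rN: "r ^ N = s" and r: "0 < r" using s N by (simp_all add: r_def)
  show "1 - 3 / real N < root N s"
  proof (rule ccontr)
    assume "\<not> 1 - 3 / real N < root N s"
    then have le: "r \<le> 1 - 3 / real N" by (simp add: r_def)
    then have "s \<le> (1 - 3 / real N) ^ N" unfolding rN[symmetric] using r by (intro power_mono) auto
    also have "\<dots> \<le> exp (- (3 / real N)) ^ N"
      using le r exp_ge_add_one_self[of "- (3 / real N)"] by (intro power_mono) auto
    also have "\<dots> = exp (- 3)" using N by (simp add: exp_of_nat_mult[symmetric])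
    also have "\<dots> < 1 / 6" using exp3 by (simp add: exp_minus field_simps)
    finally show False using s by simp
  qed
  have "1 + real N * (- (1 / (2 * real N))) \<le> (1 + - (1 / (2 * real N))) ^ N"
    by (rule Bernoulli_inequality) (use N in \<open>simp add: field_simps\<close>)
  moreover have "1 + real N * (- (1 / (2 * real N))) = 1 / 2" using N by (simp add: field_simps)
  ultimately have "1 / 2 \<le> (1 - 1 / (2 * real N)) ^ N" by simp
  then have "r ^ N < (1 - 1 / (2 * real N)) ^ N" using rN s by simp
  moreover have "0 \<le> 1 - 1 / (2 * real N)" using N by (simp add: field_simps)
  ultimately show "root N s < 1 - 1 / (2 * real N)" unfolding r_def by (rule power_less_imp_less_base)
qed

lemma square_le_four_times_power_two: "n ^ 2 \<le> 4 * (2::nat) ^ n"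
proof (induction n rule: less_induct)
  case (less n)
  show ?case
  proof (cases "n \<le> 3")
    case True
    then have "n = 0 \<or> n = 1 \<or> n = 2 \<or> n = 3" by auto
    then show ?thesis by auto
  next
    case False
    then obtain m where m: "n = Suc m" "m \<ge> 3" by (cases n) auto
    have "n ^ 2 = m ^ 2 + 2 * m + 1" using m by (simp add: power2_eq_square)
    also have "\<dots> \<le> 2 * m ^ 2"
    proof -
      have "3 * m \<le> m * m" using m(2) by (rule mult_right_mono) simp
      then show ?thesis using m(2) unfolding power2_eq_square by linarith
    qed
    also have "\<dots> \<le> 2 * (4 * 2 ^ m)" using less[of m] m by simp
    also have "\<dots> = 4 * 2 ^ n" using m by simp
    finally show ?thesis .
  qed
qed

lemma mult_half_power_le:
  assumes "1 \<le> m"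
  shows "real m * (1 / 2) ^ (m - 1) \<le> 8 / real m"
proof -
  have "real (m ^ 2) \<le> real (4 * 2 ^ m)" using square_le_four_times_power_two[of m] by (simp only: of_nat_le_iff)
  then have sq: "real m * real m \<le> 4 * 2 ^ m" by (simp add: power2_eq_square)
  have "(2::real) ^ m = 2 * 2 ^ (m - 1)" using assms by (metis Suc_diff_1 less_le_trans power_Suc zero_less_one)
  then have "(1 / 2 :: real) ^ (m - 1) = 2 / 2 ^ m" by (simp add: power_one_over)
  then show ?thesis using sq assms by (simp add: field_simps)
qed

lemma lacunary_tail_term_le:
  fixes A K j :: nat and r :: real
  assumes A: "1 \<le> A" and r: "0 \<le> r" "r ^ (2 ^ A ^ K) \<le> 1 / 2"
  shows "real A ^ (j + Suc K) * r ^ (2 ^ A ^ (j + Suc K)) \<le> 8 * real A ^ K / real A ^ Suc j"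
proof -
  define m where "m = A ^ Suc j"
  define D where "D = A ^ K * (m - 1)"
  have m: "1 \<le> m" using A by (simp add: m_def)
  have Ak: "A ^ (j + Suc K) = A ^ K * m" by (simp add: m_def power_add mult.commute)
  have "2 ^ A ^ (j + Suc K) = 2 ^ A ^ K * (2::nat) ^ D"
    unfolding Ak D_def power_add[symmetric] using m by (simp add: algebra_simps)
  then have "r ^ (2 ^ A ^ (j + Suc K)) = (r ^ (2 ^ A ^ K)) ^ (2 ^ D)" by (simp add: power_mult)
  also have "\<dots> \<le> (1 / 2) ^ (2 ^ D)" using r by (intro power_mono) auto
  also have "\<dots> \<le> (1 / 2) ^ D" by (rule power_decreasing) (use less_exp[of D] in auto)
  also have "\<dots> \<le> (1 / 2) ^ (m - 1)"
    using A by (intro power_decreasing) (auto simp: D_def)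
  finally have "real A ^ (j + Suc K) * r ^ (2 ^ A ^ (j + Suc K)) \<le> real A ^ K * (real m * (1 / 2) ^ (m - 1))"
    by (subst of_nat_power[symmetric], unfold Ak) (simp add: mult_left_mono mult.assoc)
  also have "\<dots> \<le> real A ^ K * (8 / real m)" by (intro mult_left_mono mult_half_power_le m) simp
  finally show ?thesis by (simp add: m_def mult.commute)
qed

lemma sum_ge_minus_geometric:
  fixes t :: "nat \<Rightarrow> real"
  assumes "\<And>k. \<bar>t k\<bar> \<le> B * x ^ k" "1 < x" "0 \<le> B"
  shows "- (B * x ^ K / (x - 1)) \<le> (\<Sum>k<K. t k)"
proof -
  have "- (B * x ^ K / (x - 1)) \<le> - (B * ((x ^ K - 1) / (x - 1)))"
    using mult_left_mono[of 1 x B] assms(2,3) by (simp add: field_simps)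
  also have "\<dots> = (\<Sum>k<K. - (B * x ^ k))"
    using assms(2) by (simp add: sum_gp_strict sum_negf sum_distrib_left[symmetric] field_simps)
  also have "\<dots> \<le> (\<Sum>k<K. t k)" using assms(1) by (intro sum_mono) (smt (verit))
  finally show ?thesis .
qed

lemma suminf_ge_minus_geometric:
  fixes t :: "nat \<Rightarrow> real"
  assumes "summable t" "\<And>j. \<bar>t j\<bar> \<le> C * (1 / x) ^ j" "1 < x"
  shows "- (C * x / (x - 1)) \<le> (\<Sum>j. t j)"
proof -
  have geometric: "(\<lambda>j. C * (1 / x) ^ j) sums (C * (x / (x - 1)))"
    using sums_mult[OF geometric_sums[of "1 / x"], of C] assms(3) by (simp add: field_simps)
  have "- (C * x / (x - 1)) = (\<Sum>j. - (C * (1 / x) ^ j))"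
    using sums_minus[OF geometric] by (simp add: sums_iff)
  also have "\<dots> \<le> (\<Sum>j. t j)"
  proof (rule suminf_le)
    show "- (C * (1 / x) ^ j) \<le> t j" for j using abs_le_D2[OF assms(2)[of j]] by linarith
  qed (use assms(1) summable_minus[OF sums_summable[OF geometric]] in auto)
  finally show ?thesis .
qed

lemma lacunary_series_lower:
  fixes h :: "complex \<Rightarrow> real"
  assumes hB: "\<forall>w\<in>ball 0 1. \<bar>h w\<bar> \<le> B * norm w" and B: "0 \<le> B"
    and A: "4 \<le> A" "36 * B \<le> real A - 1" and z: "norm z < 1"
    and peak: "1 / 2 < h (z ^ (2 ^ A ^ K))" and small: "norm z ^ (2 ^ A ^ K) \<le> 1 / 2"
  shows "real A ^ K / 4 \<le> lacunary_series A h z"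
proof -
  define t where "t k = real A ^ k * h (z ^ (2 ^ A ^ k))" for k
  have A1: "1 < real A" using A by simp
  have t_le: "\<bar>t k\<bar> \<le> B * (real A ^ k * norm z ^ (2 ^ A ^ k))" for k
  proof -
    have "z ^ (2 ^ A ^ k) \<in> ball 0 1" using z by (simp add: norm_power power_less_one_iff)
    from hB[rule_format, OF this] have "\<bar>h (z ^ (2 ^ A ^ k))\<bar> \<le> B * norm z ^ (2 ^ A ^ k)"
      by (simp add: norm_power)
    from mult_left_mono[OF this, of "real A ^ k"] show ?thesis
      by (simp add: t_def abs_mult mult.left_commute)
  qed
  have summable: "summable t"
    unfolding t_def using A z by (intro summable_lacunary_series[OF hB]) auto
  have "\<bar>t k\<bar> \<le> B * real A ^ k" for k
    using order_trans[OF t_le mult_left_mono[OF mult_right_le_one_le]] B z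
    by (simp add: power_le_one)
  then have head: "- (B * real A ^ K / (real A - 1)) \<le> (\<Sum>k<K. t k)"
    by (rule sum_ge_minus_geometric[OF _ A1 B])
  have "\<bar>t (j + Suc K)\<bar> \<le> 8 * B * real A ^ K / real A * (1 / real A) ^ j" for j
  proof -
    have "real A ^ (j + Suc K) * norm z ^ (2 ^ A ^ (j + Suc K)) \<le> 8 * real A ^ K / real A ^ Suc j"
      by (rule lacunary_tail_term_le) (use A small in auto)
    from order_trans[OF t_le mult_left_mono[OF this B]]
    have "\<bar>t (j + Suc K)\<bar> \<le> B * (8 * real A ^ K / real A ^ Suc j)" .
    then show ?thesis by (simp add: power_one_over field_simps)
  qed
  then have tail: "- (8 * B * real A ^ K / real A * real A / (real A - 1)) \<le> (\<Sum>j. t (j + Suc K))"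
    by (intro suminf_ge_minus_geometric[OF _ _ A1] summable_iff_shift[THEN iffD2, OF summable])
  have "real A ^ K * (1 / 2) < real A ^ K * h (z ^ (2 ^ A ^ K))"
    using peak A1 by (intro mult_strict_left_mono) auto
  then have "real A ^ K / 2 < t K" by (simp add: t_def)
  moreover have "lacunary_series A h z = suminf t" by (simp add: lacunary_series_def t_def[abs_def])
  then have "lacunary_series A h z = (\<Sum>j. t (j + Suc K)) + ((\<Sum>k<K. t k) + t K)"
    using suminf_split_initial_segment[OF summable, of "Suc K"] by simp
  moreover have "9 * B * real A ^ K / (real A - 1) \<le> real A ^ K / 4"
    using mult_right_mono[OF A(2), of "real A ^ K"] A1 by (simp add: field_simps)
  moreover have "8 * B * real A ^ K / real A * real A / (real A - 1) = 8 * B * real A ^ K / (real A - 1)"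
    "9 * B * real A ^ K / (real A - 1) = 8 * B * real A ^ K / (real A - 1) + B * real A ^ K / (real A - 1)"
    using A1 by (simp_all add: add_divide_distrib[symmetric] algebra_simps)
  ultimately show ?thesis using head tail by linarith
qed

lemma lacunary_series_ratio_near_boundary:
  fixes h :: "complex \<Rightarrow> real"
  assumes hB: "\<forall>w\<in>ball 0 1. \<bar>h w\<bar> \<le> B * norm w" and B: "0 \<le> B"
    and A: "4 \<le> A" "36 * B \<le> real A - 1"
    and peaks: "\<forall>\<theta>\<in>{0..<2*pi}. (SUP r\<in>{1/6<..<1/3::real}. h (complex_of_real r * cis \<theta>)) \<ge> 1"
  shows "\<exists>r. 1 - 3 / real (2 ^ A ^ K) < r \<and> r < 1 \<and>
    1 / 8 \<le> lacunary_series A h (complex_of_real r * cis \<theta>) / \<bar>ln (1 - r)\<bar>"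
proof -
  define N where "N = (2::nat) ^ A ^ K"
  have N: "1 \<le> N" by (simp add: N_def)
  define \<phi> where "\<phi> = Arg2pi (cis (real N * \<theta>))"
  have \<phi>: "\<phi> \<in> {0..<2*pi}" "cis \<phi> = cis (real N * \<theta>)"
    using Arg2pi_ge_0 Arg2pi_lt_2pi complex_norm_eq_1_exp[of "cis (real N * \<theta>)"]
    by (auto simp: \<phi>_def cis_conv_exp)
  have "bdd_above ((\<lambda>s. h (complex_of_real s * cis \<phi>)) ` {1/6<..<1/3})"
  proof (rule bdd_aboveI2)
    fix s :: real assume "s \<in> {1/6<..<1/3}"
    then have "\<bar>h (complex_of_real s * cis \<phi>)\<bar> \<le> B * s"
      using hB[rule_format, of "complex_of_real s * cis \<phi>"] by (auto simp: norm_mult)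
    then show "h (complex_of_real s * cis \<phi>) \<le> B"
      using mult_left_le[of s B] B \<open>s \<in> {1/6<..<1/3}\<close> abs_ge_self[of "h (complex_of_real s * cis \<phi>)"]
      by simp
  qed
  with peaks \<phi>(1) obtain s where s: "1 / 6 < s" "s < 1 / 3" "1 / 2 < h (complex_of_real s * cis \<phi>)"
    using less_cSUP_iff[of "{1/6<..<1/3::real}" _ "1 / 2"] by fastforce
  define r where "r = root N s"
  have r: "1 - 3 / real N < r" "r < 1 - 1 / (2 * real N)" "r ^ N = s" "0 < r"
    using root_near_one[of s N] s N by (simp_all add: r_def)
  define z where "z = complex_of_real r * cis \<theta>"
  have z: "norm z = r" "z ^ N = complex_of_real s * cis \<phi>"
    using r by (simp_all add: z_def norm_mult power_mult_distrib Complex.DeMoivre \<phi>(2) of_real_power[symmetric])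
  have lower: "real A ^ K / 4 \<le> lacunary_series A h z"
    by (rule lacunary_series_lower[OF hB B A]) (use z r s N in \<open>simp_all add: N_def norm_mult\<close>)
  have AK: "0 < real A ^ K" using A by simp
  then have pos: "0 < lacunary_series A h z" using lower by linarith
  have ln_neg: "ln (1 - r) < 0" using r by simp
  have "\<bar>ln (1 - r)\<bar> = ln (1 / (1 - r))" using ln_neg r by (simp add: ln_div)
  also have "\<dots> \<le> ln (2 * real N)"
  proof (subst ln_le_cancel_iff)
    have "1 / (2 * real N) < 1 - r" using r by simp
    moreover have "0 < 1 / (2 * real N)" using N by simp
    ultimately have p: "0 < 1 - r" and le: "1 / (2 * real N) \<le> 1 - r" by linarith+
    have "1 \<le> (1 - r) * (2 * real N)" using mult_right_mono[OF le, of "2 * real N"] N by simp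
    then show "1 / (1 - r) \<le> 2 * real N" using p by (simp add: divide_le_eq mult.commute)
  qed (use N r in auto)
  also have "\<dots> = ln 2 + real (A ^ K) * ln 2" by (simp add: ln_mult N_def ln_realpow)
  also have "\<dots> \<le> 1 + real (A ^ K) * 1"
    using ln_le_minus_one[of 2] by (intro add_mono mult_left_mono) auto
  also have "\<dots> \<le> 2 * real A ^ K" using A by simp
  finally have "lacunary_series A h z / (2 * real A ^ K) \<le> lacunary_series A h z / \<bar>ln (1 - r)\<bar>"
    using pos ln_neg AK by (intro divide_left_mono) (auto simp: mult_pos_neg)
  moreover have "1 / 8 \<le> lacunary_series A h z / (2 * real A ^ K)"
    using lower A by (simp add: field_simps)
  ultimately show ?thesis using r by (auto simp: N_def z_def)
qed

lemma Limsup_at_left_ge: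
  fixes f :: "real \<Rightarrow> ereal"
  assumes "\<And>\<delta>. \<delta> > 0 \<Longrightarrow> \<exists>r. 1 - \<delta> < r \<and> r < 1 \<and> c \<le> f r"
  shows "c \<le> Limsup (at_left 1) f"
  unfolding Limsup_def
proof (rule INF_greatest)
  fix P assume "P \<in> {P. eventually P (at_left (1::real))}"
  then obtain b where b: "b < 1" "\<And>y. b < y \<Longrightarrow> y < 1 \<Longrightarrow> P y"
    using eventually_at_left[of 0 1 P] by auto
  obtain r where r: "b < r" "r < 1" "c \<le> f r" using assms[of "1 - b"] b by auto
  then have "f r \<le> (SUP x\<in>{x. P x}. f x)" using b by (intro SUP_upper) auto
  then show "c \<le> (SUP x\<in>{x. P x}. f x)" using r(3) by simp
qed

lemma Limsup_lacunary_series_ge: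
  fixes h :: "complex \<Rightarrow> real"
  assumes hB: "\<forall>w\<in>ball 0 1. \<bar>h w\<bar> \<le> B * norm w" and B: "0 \<le> B"
    and A: "4 \<le> A" "36 * B \<le> real A - 1"
    and peaks: "\<forall>\<theta>\<in>{0..<2*pi}. (SUP r\<in>{1/6<..<1/3::real}. h (complex_of_real r * cis \<theta>)) \<ge> 1"
  shows "ereal (1 / 8) \<le> Limsup (at_left 1)
    (\<lambda>r. ereal (lacunary_series A h (complex_of_real r * cis \<theta>) / \<bar>ln (1 - r)\<bar>))"
proof (rule Limsup_at_left_ge)
  fix \<delta> :: real assume "\<delta> > 0"
  obtain K where K: "3 / \<delta> < 2 ^ K" using real_arch_pow[of 2 "3 / \<delta>"] by auto
  have "(2::real) ^ K \<le> 2 ^ A ^ K"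
    using less_exp[of K] power_mono[of 2 A K] A by (intro power_increasing) auto
  then have "\<delta> * 2 ^ K \<le> \<delta> * 2 ^ A ^ K" using \<open>\<delta> > 0\<close> by (intro mult_left_mono) auto
  moreover have "3 < \<delta> * 2 ^ K" using K \<open>\<delta> > 0\<close> by (simp add: field_simps)
  ultimately have "3 / real (2 ^ A ^ K) < \<delta>" by (simp add: field_simps)
  with lacunary_series_ratio_near_boundary[OF hB B A peaks, of K \<theta>]
  show "\<exists>r. 1 - \<delta> < r \<and> r < 1 \<and>
    ereal (1 / 8) \<le> ereal (lacunary_series A h (complex_of_real r * cis \<theta>) / \<bar>ln (1 - r)\<bar>)"
    by force
qed

theorem lemma11:
  fixes h :: "complex \<Rightarrow> real" and B :: real
  assumes "harmonic_on h unit_disc"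
    and "B > 0"
    and "\<forall>z\<in>unit_disc. \<bar>h z\<bar> \<le> B * norm z"
    and "\<forall>\<theta>\<in>{0..<2*pi}.
           (SUP r\<in>{1/6<..<1/3::real}. h (complex_of_real r * cis \<theta>)) \<ge> 1"
  shows "\<exists>A0::nat. \<forall>A::nat. A \<ge> A0 \<longrightarrow>
           (\<forall>z\<in>unit_disc. summable (\<lambda>k. real A ^ k * h (z ^ (2 ^ (A ^ k))))) \<and>
           class_K (\<lambda>z. \<Sum>k. real A ^ k * h (z ^ (2 ^ (A ^ k)))) \<and>
           (\<exists>d>0. \<forall>\<theta>\<in>{0..<2*pi}.
              Limsup (at_left (1::real))
                (\<lambda>r. ereal ((\<Sum>k. real A ^ k * h ((complex_of_real r * cis \<theta>) ^ (2 ^ (A ^ k))))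
                             / \<bar>ln (1 - r)\<bar>)) \<ge> ereal d)"
proof (intro exI[of _ "nat \<lceil>36 * B\<rceil> + 5"] allI impI conjI)
  fix A :: nat
  assume "nat \<lceil>36 * B\<rceil> + 5 \<le> A"
  then have A: "4 \<le> A" "36 * B \<le> real A - 1" by linarith+
  have B: "0 \<le> B" using assms(2) by simp
  have series: "(\<lambda>z. \<Sum>k. real A ^ k * h (z ^ (2 ^ (A ^ k)))) = lacunary_series A h"
    by (simp add: fun_eq_iff lacunary_series_def)
  show "\<forall>z\<in>unit_disc. summable (\<lambda>k. real A ^ k * h (z ^ (2 ^ (A ^ k))))"
    using summable_lacunary_series[OF assms(3)] A by simp
  show "class_K (\<lambda>z. \<Sum>k. real A ^ k * h (z ^ (2 ^ (A ^ k))))"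
    unfolding class_K_def series
    using harmonic_on_lacunary_series[OF assms(1,3)] lacunary_series_le[OF assms(3) B A(1)] A
    by (intro conjI exI[of _ "B * (4 + 4 * real A)"]) auto
  show "\<exists>d>0. \<forall>\<theta>\<in>{0..<2*pi}. Limsup (at_left (1::real))
          (\<lambda>r. ereal ((\<Sum>k. real A ^ k * h ((complex_of_real r * cis \<theta>) ^ (2 ^ (A ^ k))))
                       / \<bar>ln (1 - r)\<bar>)) \<ge> ereal d"
    using Limsup_lacunary_series_ge[OF assms(3) B A assms(4)]
    by (intro exI[of _ "1 / 8"]) (simp add: lacunary_series_def)
qed

end
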